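(* Let $\mathcal{F}=(W,\preceq,\mathcal{V})$ be a finite poset model and $B\subseteq W\times W$ a weak $\pm$-bisimulation. For all $w_1,w_2$ with $B(w_1,w_2)$ and every $\uparrow\!\downarrow$-path $\pi_1:[0;2h]\to W$ from $w_1$, there is a $\downarrow$-path $\pi_2:[0;k]\to W$ from $w_2$ such that $B(\pi_1(2h),\pi_2(k))$ and for each $j\in[0;k)$ there is $i\in[0;2h)$ with $B(\pi_1(i),\pi_2(j))$.
   Context: Fix a set PL of proposition letters. A poset model is $\mathcal{F}=(W,\preceq,\mathcal{V})$ with $(W,\preceq)$ a partial order and $\mathcal{V}:\mathrm{PL}\to\mathcal{P}(W)$. $[m;n]=\{i\in\mathbb{N}:m\le i\le n\}$, $[m;n)=\{i:m\le i<n\}$. An undirected path of length $\ell$ from $w$ is $\pi:[0;\ell]\to W$ with $\pi(0)=w$ and, for each $i\in[0;\ell)$, $\pi(i)\preceq\pi(i+1)$ or $\pi(i+1)\preceq\pi(i)$. A $\downarrow$-path is an undirected path of length $\ell\ge1$ with $\pi(\ell)\preceq\pi(\ell-1)$. A $\pm$-path is a $\downarrow$-path of length $\ell\ge2$ with $\pi(0)\preceq\pi(1)$. An $\uparrow\!\downarrow$-path of length $2h$ ($h\ge1$) satisfies $\pi(2i)\preceq\pi(2i+1)\succeq\pi(2i+2)$ for all $i\in[0;h)$. A weak $\pm$-bisimulation is a symmetric relation $B\subseteq W\times W$ such that whenever $B(w_1,w_2)$: (1) for every $p\in\mathrm{PL}$, $w_1\in\mathcal{V}(p)$ iff $w_2\in\mathcal{V}(p)$;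 (2) for all $u_1,d_1\in W$ with ($w_1\preceq u_1$ or $u_1\preceq w_1$) and $d_1\preceq u_1$, there is a $\pm$-path $\pi_2:[0;\ell_2]\to W$ from $w_2$ with $B(d_1,\pi_2(\ell_2))$ and, for all $j\in[0;\ell_2)$, $B(w_1,\pi_2(j))$ or $B(u_1,\pi_2(j))$. *)

theory Defs
  imports Main
begin

definition poset_model :: "'w set \<Rightarrow> ('w \<Rightarrow> 'w \<Rightarrow> bool) \<Rightarrow> ('p \<Rightarrow> 'w set) \<Rightarrow> bool" where
  "poset_model W le V \<longleftrightarrow>
     (\<forall>x\<in>W. le x x) \<and>
     (\<forall>x\<in>W. \<forall>y\<in>W. le x y \<and> le y x \<longrightarrow> x = y) \<and>
     (\<forall>x\<in>W. \<forall>y\<in>W. \<forall>z\<in>W. le x y \<and> le y z \<longrightarrow> le x z) \<and>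
     (\<forall>p. V p \<subseteq> W)"

definition undirected_path :: "'w set \<Rightarrow> ('w \<Rightarrow> 'w \<Rightarrow> bool) \<Rightarrow> (nat \<Rightarrow> 'w) \<Rightarrow> nat \<Rightarrow> 'w \<Rightarrow> bool" where
  "undirected_path W le \<pi> l w \<longleftrightarrow>
     \<pi> 0 = w \<and> (\<forall>i\<le>l. \<pi> i \<in> W) \<and>
     (\<forall>i<l. le (\<pi> i) (\<pi> (Suc i)) \<or> le (\<pi> (Suc i)) (\<pi> i))"

definition down_path :: "'w set \<Rightarrow> ('w \<Rightarrow> 'w \<Rightarrow> bool) \<Rightarrow> (nat \<Rightarrow> 'w) \<Rightarrow> nat \<Rightarrow> 'w \<Rightarrow> bool" where
  "down_path W le \<pi> l w \<longleftrightarrow>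
     undirected_path W le \<pi> l w \<and> 1 \<le> l \<and> le (\<pi> l) (\<pi> (l - 1))"

definition pm_path :: "'w set \<Rightarrow> ('w \<Rightarrow> 'w \<Rightarrow> bool) \<Rightarrow> (nat \<Rightarrow> 'w) \<Rightarrow> nat \<Rightarrow> 'w \<Rightarrow> bool" where
  "pm_path W le \<pi> l w \<longleftrightarrow>
     down_path W le \<pi> l w \<and> 2 \<le> l \<and> le (\<pi> 0) (\<pi> 1)"

definition updown_path :: "'w set \<Rightarrow> ('w \<Rightarrow> 'w \<Rightarrow> bool) \<Rightarrow> (nat \<Rightarrow> 'w) \<Rightarrow> nat \<Rightarrow> 'w \<Rightarrow> bool" where
  "updown_path W le \<pi> h w \<longleftrightarrow>
     1 \<le> h \<and> \<pi> 0 = w \<and> (\<forall>i\<le>2*h. \<pi> i \<in> W) \<and>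
     (\<forall>i<h. le (\<pi> (2*i)) (\<pi> (2*i+1)) \<and> le (\<pi> (2*i+2)) (\<pi> (2*i+1)))"

definition weak_pm_bisim :: "'w set \<Rightarrow> ('w \<Rightarrow> 'w \<Rightarrow> bool) \<Rightarrow> ('p \<Rightarrow> 'w set) \<Rightarrow> ('w \<times> 'w) set \<Rightarrow> bool" where
  "weak_pm_bisim W le V B \<longleftrightarrow>
     B \<subseteq> W \<times> W \<and> sym B \<and>
     (\<forall>w1 w2. (w1, w2) \<in> B \<longrightarrow>
        (\<forall>p. w1 \<in> V p \<longleftrightarrow> w2 \<in> V p) \<and>
        (\<forall>u1\<in>W. \<forall>d1\<in>W. (le w1 u1 \<or> le u1 w1) \<and> le d1 u1 \<longrightarrow>
           (\<exists>\<pi>2 l2. pm_path W le \<pi>2 l2 w2 \<and> (d1, \<pi>2 l2) \<in> B \<and>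
              (\<forall>j<l2. (w1, \<pi>2 j) \<in> B \<or> (u1, \<pi>2 j) \<in> B))))"

end

theory Submission
  imports Defs
begin

text \<open>Induction on the number h of peaks. The bisimulation clause applied to the first peak
  \<open>\<pi>\<^sub>1(0) \<preceq> \<pi>\<^sub>1(1) \<succeq> \<pi>\<^sub>1(2)\<close> yields a \<open>\<plusminus>\<close>-path from \<open>w\<^sub>2\<close>, in particular a \<open>\<down>\<close>-path, whose
  end is related to \<open>\<pi>\<^sub>1(2)\<close> and whose other points are related to \<open>\<pi>\<^sub>1(0)\<close> or \<open>\<pi>\<^sub>1(1)\<close>.
  The remaining h - 1 peaks start at \<open>\<pi>\<^sub>1(2)\<close>, so the induction hypothesis continues this
  path from its endpoint, and the concatenation is the required \<open>\<down>\<close>-path.\<close>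

definition path_append :: "(nat \<Rightarrow> 'w) \<Rightarrow> nat \<Rightarrow> (nat \<Rightarrow> 'w) \<Rightarrow> nat \<Rightarrow> 'w" where
  "path_append \<sigma> l \<tau> = (\<lambda>i. if i \<le> l then \<sigma> i else \<tau> (i - l))"

lemma path_append_high:
  assumes "\<tau> 0 = \<sigma> l" and "l \<le> i"
  shows "path_append \<sigma> l \<tau> i = \<tau> (i - l)"
  using assms by (auto simp: path_append_def)

lemma undirected_path_append:
  assumes \<sigma>: "undirected_path W le \<sigma> l w" and \<tau>: "undirected_path W le \<tau> k (\<sigma> l)"
  shows "undirected_path W le (path_append \<sigma> l \<tau>) (l + k) w"
  unfolding undirected_path_def
proof (intro conjI allI impI)
  show "path_append \<sigma> l \<tau> 0 = w"
    using \<sigma> by (simp add: path_append_def undirected_path_def)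
  have \<tau>0: "\<tau> 0 = \<sigma> l" using \<tau> by (simp add: undirected_path_def)
  fix i
  show "path_append \<sigma> l \<tau> i \<in> W" if "i \<le> l + k"
    using that \<sigma> \<tau> by (simp add: path_append_def undirected_path_def)
  show "le (path_append \<sigma> l \<tau> i) (path_append \<sigma> l \<tau> (Suc i)) \<or>
        le (path_append \<sigma> l \<tau> (Suc i)) (path_append \<sigma> l \<tau> i)" if "i < l + k"
  proof (cases "i < l")
    case True
    then show ?thesis using \<sigma> by (simp add: path_append_def undirected_path_def)
  next
    case False
    then have "path_append \<sigma> l \<tau> i = \<tau> (i - l)" "path_append \<sigma> l \<tau> (Suc i) = \<tau> (Suc (i - l))"
      by (simp_all add: path_append_high \<tau>0 Suc_diff_le)
    moreover have "i - l < k" using that False by simp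
    ultimately show ?thesis using \<tau> by (simp add: undirected_path_def)
  qed
qed

lemma down_path_append:
  assumes \<sigma>: "undirected_path W le \<sigma> l w" and \<tau>: "down_path W le \<tau> k (\<sigma> l)"
  shows "down_path W le (path_append \<sigma> l \<tau>) (l + k) w"
proof -
  have \<tau>0: "\<tau> 0 = \<sigma> l" and k: "1 \<le> k"
    using \<tau> by (simp_all add: down_path_def undirected_path_def)
  have "path_append \<sigma> l \<tau> (l + k) = \<tau> k" "path_append \<sigma> l \<tau> (l + k - 1) = \<tau> (k - 1)"
    using k by (simp_all add: path_append_high \<tau>0)
  then show ?thesis
    using undirected_path_append[OF \<sigma>] \<tau> k by (simp add: down_path_def)
qed

lemma updown_path_first_peak:
  assumes "updown_path W le \<pi> h w"
  shows "\<pi> 0 = w" "\<pi> 1 \<in> W" "\<pi> 2 \<in> W" "le (\<pi> 0) (\<pi> 1)" "le (\<pi> 2) (\<pi> 1)"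
proof -
  have "1 \<le> h" "\<forall>i\<le>2 * h. \<pi> i \<in> W"
    and "le (\<pi> (2 * 0)) (\<pi> (2 * 0 + 1)) \<and> le (\<pi> (2 * 0 + 2)) (\<pi> (2 * 0 + 1))"
    using assms by (auto simp: updown_path_def simp del: mult_0_right)
  then show "\<pi> 1 \<in> W" "\<pi> 2 \<in> W" "le (\<pi> 0) (\<pi> 1)" "le (\<pi> 2) (\<pi> 1)"
    by (auto simp: numeral_2_eq_2)
  show "\<pi> 0 = w" using assms by (simp add: updown_path_def)
qed

lemma updown_path_tail:
  assumes "updown_path W le \<pi> (Suc h) w" and "1 \<le> h"
  shows "updown_path W le (\<lambda>i. \<pi> (i + 2)) h (\<pi> 2)"
  unfolding updown_path_def
proof (intro conjI allI impI)
  fix i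
  show "\<pi> (i + 2) \<in> W" if "i \<le> 2 * h"
    using assms that by (simp add: updown_path_def)
  assume "i < h"
  then have "le (\<pi> (2 * Suc i)) (\<pi> (2 * Suc i + 1)) \<and> le (\<pi> (2 * Suc i + 2)) (\<pi> (2 * Suc i + 1))"
    using assms(1) by (simp add: updown_path_def del: mult_Suc_right)
  then show "le (\<pi> (2 * i + 2)) (\<pi> (2 * i + 1 + 2))" "le (\<pi> (2 * i + 2 + 2)) (\<pi> (2 * i + 1 + 2))"
    by (simp_all add: algebra_simps)
qed (use assms in \<open>auto simp: numeral_2_eq_2\<close>)

lemma weak_pm_bisim_down_path:
  assumes "weak_pm_bisim W le V B" and "(w1, w2) \<in> B"
    and "u1 \<in> W" "d1 \<in> W" "le w1 u1 \<or> le u1 w1" "le d1 u1"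
  obtains \<sigma> l where "down_path W le \<sigma> l w2" "(d1, \<sigma> l) \<in> B"
    "\<forall>j<l. (w1, \<sigma> j) \<in> B \<or> (u1, \<sigma> j) \<in> B"
  using assms unfolding weak_pm_bisim_def pm_path_def by blast

lemma weak_pm_bisim_updown_path_to_down_path:
  assumes bisim: "weak_pm_bisim W le V B"
    and "(w1, w2) \<in> B" and "updown_path W le \<pi> h w1"
  shows "\<exists>\<rho> k. down_path W le \<rho> k w2 \<and> (\<pi> (2 * h), \<rho> k) \<in> B \<and>
           (\<forall>j<k. \<exists>i<2 * h. (\<pi> i, \<rho> j) \<in> B)"
  using assms(2,3)
proof (induction h arbitrary: \<pi> w1 w2)
  case 0
  then show ?case by (simp add: updown_path_def)
next
  case (Suc h)
  note peak = updown_path_first_peak[OF Suc.prems(2)]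
  obtain \<sigma> l where \<sigma>: "down_path W le \<sigma> l w2" and \<sigma>l: "(\<pi> 2, \<sigma> l) \<in> B"
    and \<sigma>j: "\<forall>j<l. (\<pi> 0, \<sigma> j) \<in> B \<or> (\<pi> 1, \<sigma> j) \<in> B"
    using weak_pm_bisim_down_path[OF bisim Suc.prems(1)] peak by metis
  have \<sigma>j': "\<exists>i<2 * Suc h. (\<pi> i, \<sigma> j) \<in> B" if "j < l" for j
  proof -
    from \<sigma>j that consider "(\<pi> 0, \<sigma> j) \<in> B" | "(\<pi> 1, \<sigma> j) \<in> B" by blast
    then show ?thesis
    proof cases
      case 1
      then show ?thesis by (intro exI[of _ 0]) simp
    next
      case 2
      then show ?thesis by (intro exI[of _ 1]) simp
    qed
  qed
  show ?case
  proof (cases "h = 0")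
    case True
    then show ?thesis using \<sigma> \<sigma>l \<sigma>j' by (auto simp: numeral_2_eq_2)
  next
    case False
    obtain \<tau> k where \<tau>: "down_path W le \<tau> k (\<sigma> l)" and \<tau>k: "(\<pi> (2 * h + 2), \<tau> k) \<in> B"
      and \<tau>j: "\<forall>j<k. \<exists>i<2 * h. (\<pi> (i + 2), \<tau> j) \<in> B"
      using Suc.IH[OF \<sigma>l updown_path_tail[OF Suc.prems(2)]] False by auto
    have \<tau>0: "\<tau> 0 = \<sigma> l" using \<tau> by (simp add: down_path_def undirected_path_def)
    let ?\<rho> = "path_append \<sigma> l \<tau>"
    have "undirected_path W le \<sigma> l w2" using \<sigma> by (simp add: down_path_def)
    then have "down_path W le ?\<rho> (l + k) w2" using \<tau> by (rule down_path_append)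
    moreover have "(\<pi> (2 * Suc h), ?\<rho> (l + k)) \<in> B"
      using \<tau>k by (simp add: path_append_high \<tau>0)
    moreover have "\<exists>i<2 * Suc h. (\<pi> i, ?\<rho> j) \<in> B" if "j < l + k" for j
    proof (cases "j < l")
      case True
      then show ?thesis using \<sigma>j' by (simp add: path_append_def)
    next
      case False
      with that have "j - l < k" by simp
      with \<tau>j obtain i where "i < 2 * h" "(\<pi> (i + 2), \<tau> (j - l)) \<in> B" by blast
      then show ?thesis using False
        by (intro exI[of _ "i + 2"]) (simp add: path_append_high \<tau>0)
    qed
    ultimately show ?thesis by blast
  qed
qed

theorem lemma7:
  fixes W :: "'w set" and le :: "'w \<Rightarrow> 'w \<Rightarrow> bool" and V :: "'p \<Rightarrow> 'w set"
    and B :: "('w \<times> 'w) set"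
  assumes "poset_model W le V" and "finite W"
    and "weak_pm_bisim W le V B"
    and "(w1, w2) \<in> B"
    and "updown_path W le \<pi>1 h w1"
  shows "\<exists>\<pi>2 k. down_path W le \<pi>2 k w2 \<and> (\<pi>1 (2*h), \<pi>2 k) \<in> B \<and>
           (\<forall>j<k. \<exists>i<2*h. (\<pi>1 i, \<pi>2 j) \<in> B)"
  using weak_pm_bisim_updown_path_to_down_path[OF assms(3-5)] .

end
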